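(* Let $\mathbf L\in\mathbb R_+^{n\times k}$. If there exist $\mathbf p\in\operatorname{relint}(\Delta_n)$ and $c\in\mathbb R_+$ such that $\mathbf p^\top\boldsymbol\ell_t=c$ for all $t\in[k]$, then $\mathrm{CCdim}(\mathbf L)\ge\operatorname{affdim}(\mathbf L)-1$.
   Context: Notation: $[m]=\{1,\dots,m\}$; $\Delta_n=\{\mathbf p\in\mathbb R_+^n:\sum_i p_i=1\}$, with relative interior the points having all entries strictly positive. A loss matrix $\mathbf L\in\mathbb R_+^{n\times k}$ has columns $\boldsymbol\ell_t$, $t\in[k]$; $\operatorname{affdim}(\mathbf L)$ is the dimension of the affine hull of $\{\boldsymbol\ell_1,\dots,\boldsymbol\ell_k\}$. Standing assumption: for each $t\in[k]$ there is $\mathbf q\in\Delta_n$ with $\operatorname{argmin}_{t'}\mathbf q^\top\boldsymbol\ell_{t'}=\{t\}$. A surrogate loss $\boldsymbol\psi:\mathcal C\to\mathbb R_+^n$ ($\mathcal C\subseteq\mathbb R^d$ convex) is $\mathbf L$-calibrated if there is $\mathrm{pred}:\mathcal C\to[k]$ such that for all $\mathbf q\in\Delta_n$: $\inf_{\mathbf u\in\mathcal C:\mathrm{pred}(\mathbf u)\notin\operatorname{argmin}_t\mathbf q^\top\boldsymbol\ell_t}\mathbf q^\top\boldsymbol\psi(\mathbf u)>\inf_{\mathbf u\in\mathcal C}\mathbf q^\top\boldsymbol\psi(\mathbf u)$. $\mathrm{CCdim}(\mathbf L)$ is the smallest $d\in\mathbb Z_+$ for which there exist a convex set $\mathcal C\subseteq\mathbb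 R^d$ and a convex (componentwise convex) $\mathbf L$-calibrated surrogate $\boldsymbol\psi:\mathcal C\to\mathbb R_+^n$ ($\infty$ if none exists). *)

theory Defs
  imports "HOL-Analysis.Analysis" "HOL-Library.Extended_Nat"
begin

text \<open>The loss matrix L (n x k, n outcomes, k predictions) is a
  real matrix of type real^'k^'n (rows indexed by outcomes 'n, columns by
  predictions 'k); its t-th column is column t L :: real^'n.
  Since the surrogate dimension d varies inside the definition of CCdim,
  vectors of R^d are represented as functions nat => real vanishing
  outside {..<d}.\<close>

definition prob_simplex :: "(real^'n) set" where
  "prob_simplex = {p. (\<forall>i. 0 \<le> p $ i) \<and> sum (\<lambda>i. p $ i) UNIV = 1}"

definition relint_prob_simplex :: "(real^'n) set" where
  "relint_prob_simplex = {p. (\<forall>i. 0 < p $ i) \<and> sum (\<lambda>i. p $ i) UNIV = 1}"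

definition Rvec :: "nat \<Rightarrow> (nat \<Rightarrow> real) set" where
  "Rvec d = {u. \<forall>i\<ge>d. u i = 0}"

definition comb :: "real \<Rightarrow> (nat \<Rightarrow> real) \<Rightarrow> (nat \<Rightarrow> real) \<Rightarrow> (nat \<Rightarrow> real)" where
  "comb \<theta> u v = (\<lambda>i. \<theta> * u i + (1 - \<theta>) * v i)"

definition convex_set :: "(nat \<Rightarrow> real) set \<Rightarrow> bool" where
  "convex_set C \<longleftrightarrow> (\<forall>u\<in>C. \<forall>v\<in>C. \<forall>\<theta>::real. 0 \<le> \<theta> \<and> \<theta> \<le> 1 \<longrightarrow> comb \<theta> u v \<in> C)"

definition convex_fun_on :: "(nat \<Rightarrow> real) set \<Rightarrow> ((nat \<Rightarrow> real) \<Rightarrow> real) \<Rightarrow> bool" where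
  "convex_fun_on C f \<longleftrightarrow> (\<forall>u\<in>C. \<forall>v\<in>C. \<forall>\<theta>::real. 0 \<le> \<theta> \<and> \<theta> \<le> 1 \<longrightarrow>
      f (comb \<theta> u v) \<le> \<theta> * f u + (1 - \<theta>) * f v)"

definition argmin_loss :: "real^'k^'n \<Rightarrow> real^'n \<Rightarrow> 'k set" where
  "argmin_loss L q = {t. \<forall>t'. q \<bullet> column t L \<le> q \<bullet> column t' L}"

text \<open>L-calibration of psi : C -> R_+^n. Infima are taken in the extended
  reals, so that the infimum over an empty set is +infinity.\<close>
definition calibrated ::
  "real^'k^'n \<Rightarrow> (nat \<Rightarrow> real) set \<Rightarrow> ((nat \<Rightarrow> real) \<Rightarrow> real^'n) \<Rightarrow> bool" where
  "calibrated L C psi \<longleftrightarrow> (\<exists>pred :: (nat \<Rightarrow> real) \<Rightarrow> 'k.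
     \<forall>q\<in>prob_simplex.
       (INF u\<in>{u\<in>C. pred u \<notin> argmin_loss L q}. ereal (q \<bullet> psi u))
         > (INF u\<in>C. ereal (q \<bullet> psi u)))"

definition convex_calibrated_surrogate_exists :: "real^'k^'n \<Rightarrow> nat \<Rightarrow> bool" where
  "convex_calibrated_surrogate_exists L d \<longleftrightarrow>
     (\<exists>C psi. C \<subseteq> Rvec d \<and> convex_set C \<and>
        (\<forall>u\<in>C. \<forall>y. 0 \<le> psi u $ y) \<and>
        (\<forall>y. convex_fun_on C (\<lambda>u. psi u $ y)) \<and>
        calibrated L C psi)"

text \<open>CCdim: smallest d, or infinity if none (Inf {} = infinity in enat)\<close>
definition CCdim :: "real^'k^'n \<Rightarrow> enat" where
  "CCdim L = (INF d\<in>{d. convex_calibrated_surrogate_exists L d}. enat d)"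

definition affdim :: "real^'k^'n \<Rightarrow> int" where
  "affdim L = aff_dim (range (\<lambda>t. column t L))"

end

theory Submission
  imports Defs
begin

text \<open>
  Let F be the infimum of p \<bullet> \<psi> on C. Separating the epigraph of
  (v_y)_y \<mapsto> \<Sum>_y p_y \<psi>_y(v_y) on C^n from the "consensus" points below level F yields
  Lagrange multipliers \<lambda>_y in the direction space S of C with \<Sum>_y \<lambda>_y = 0 that decouple
  the problem. A minimizing sequence of p \<bullet> \<psi> then nearly minimizes every weighted sum
  q \<bullet> \<psi> with \<Sum>_y (q_y / p_y) \<lambda>_y = 0, so by calibration a prediction t made infinitely
  often along it is optimal for all such q. These q contain all small tilts p \<plusminus> \<epsilon>w with
  w orthogonal to 1 and to the tilt normals, a family of dimension at most 1 + dim S; as p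
  makes all columns of L equally good, such w cannot separate any column from column t.
  Hence the columns span an affine space of dimension at most 1 + dim S.
\<close>

lemma slope_zero_of_lower_bound:
  fixes c K :: real
  assumes "\<And>t. K \<le> t * c"
  shows "c = 0"
proof (rule ccontr)
  assume "c \<noteq> 0"
  then have "K \<le> ((K - 1) / c) * c" using assms by blast
  with \<open>c \<noteq> 0\<close> show False by simp
qed

lemma slope_nonpos_of_upper_bound:
  fixes c K :: real
  assumes "\<And>t. t \<ge> 0 \<Longrightarrow> t * c \<le> K"
  shows "c \<le> 0"
proof (rule ccontr)
  assume "\<not> c \<le> 0"
  then have c: "c > 0" by simp
  have "((\<bar>K\<bar> + 1) / c) * c \<le> K" by (rule assms) (use c in simp)
  with c have "\<bar>K\<bar> + 1 \<le> K" by simp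
  then show False using abs_ge_self[of K] by linarith
qed

lemma orthogonal_comp_orthogonal_comp:
  fixes X :: "'a::euclidean_space set"
  shows "X\<^sup>\<bottom>\<^sup>\<bottom> = span X"
proof -
  have "X\<^sup>\<bottom> = (span X)\<^sup>\<bottom>"
  proof
    show "(span X)\<^sup>\<bottom> \<subseteq> X\<^sup>\<bottom>" by (rule orthogonal_comp_anti_mono) (rule span_superset)
    show "X\<^sup>\<bottom> \<subseteq> (span X)\<^sup>\<bottom>"
      by (auto simp: orthogonal_comp_def orthogonal_commute intro: orthogonal_to_span)
  qed
  then show ?thesis by (simp add: orthogonal_comp_self)
qed

lemma inner_vec_const: "Lam \<bullet> (\<chi> y. w) = (\<Sum>y\<in>UNIV. Lam$y) \<bullet> w"
  by (simp add: inner_vec_def inner_sum_left)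

lemma inner_vec_single: "Lam \<bullet> (\<chi> z. if z = y then s else 0) = Lam$y \<bullet> s"
  by (simp add: inner_vec_def if_distrib cong: if_cong)

lemma rel_interior_ball_span:
  fixes C :: "'a::euclidean_space set"
  assumes "u0 \<in> rel_interior C"
  obtains e where "e > 0" "\<And>\<delta>. \<delta> \<in> span ((\<lambda>x. x - u0) ` C) \<Longrightarrow> norm \<delta> < e \<Longrightarrow> u0 + \<delta> \<in> C"
proof -
  have u0C: "u0 \<in> C" using assms rel_interior_subset by auto
  obtain e where e: "e > 0" "ball u0 e \<inter> affine hull C \<subseteq> C"
    using assms mem_rel_interior_ball by blast
  have "affine hull C = (\<lambda>x. u0 + x) ` span ((\<lambda>x. x - u0) ` C)"
    using affine_hull_span_gen[of u0 C] by (simp add: u0C hull_inc)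
  then have "u0 + \<delta> \<in> C" if "\<delta> \<in> span ((\<lambda>x. x - u0) ` C)" "norm \<delta> < e" for \<delta>
    using e(2) that by (auto simp: dist_norm)
  then show ?thesis using e(1) that by blast
qed

lemma inner_nonpos_near_zero_imp_zero:
  fixes x :: "'a::real_inner"
  assumes "subspace S" "e > 0" and small: "\<And>\<delta>. \<delta> \<in> S \<Longrightarrow> norm \<delta> < e \<Longrightarrow> x \<bullet> \<delta> \<le> 0"
    and "\<delta> \<in> S"
  shows "x \<bullet> \<delta> = 0"
proof (cases "\<delta> = 0")
  case False
  define c where "c = e / (2 * norm \<delta>)"
  have c: "c > 0" "norm (c *\<^sub>R \<delta>) < e" using assms(2) False by (simp_all add: c_def)
  have "c *\<^sub>R \<delta> \<in> S" "- (c *\<^sub>R \<delta>) \<in> S"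
    using assms(1,4) by (simp_all add: subspace_scale subspace_neg)
  then have "x \<bullet> (c *\<^sub>R \<delta>) \<le> 0" "x \<bullet> (- (c *\<^sub>R \<delta>)) \<le> 0"
    using c(2) by (auto intro!: small simp del: inner_scaleR_right inner_minus_right)
  then have "c * (x \<bullet> \<delta>) = 0" by simp
  then show ?thesis using c(1) by simp
qed simp

text \<open>The epigraph of the separable function (v_y)_y \<mapsto> \<Sum>_y f_y(v_y) on C^n, and the
  open half-cylinder of "consensus" points (all v_y equal modulo T) lying strictly below
  level F. Separating the two is the duality step behind the Lagrange multipliers of
  the consensus problem min \<Sum>_y f_y(u).\<close>
definition sum_epigraph ::
  "'a::real_vector set \<Rightarrow> ('n::finite \<Rightarrow> 'a \<Rightarrow> real) \<Rightarrow> (('a^'n) \<times> real) set" where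
  "sum_epigraph C f = {(v, r). (\<forall>y. v$y \<in> C) \<and> (\<Sum>y\<in>UNIV. f y (v$y)) \<le> r}"

definition consensus_cylinder :: "'a::real_vector set \<Rightarrow> real \<Rightarrow> (('a^'n::finite) \<times> real) set" where
  "consensus_cylinder T F = {(v, r). (\<exists>u. \<forall>y. v$y - u \<in> T) \<and> r < F}"

lemma convex_sum_epigraph:
  assumes cvx: "\<And>y. convex_on C (f y)"
  shows "convex (sum_epigraph C f)"
  unfolding convex_def
proof (intro ballI allI impI)
  fix x z and a b :: real
  assume x: "x \<in> sum_epigraph C f" and z: "z \<in> sum_epigraph C f" and ab: "0 \<le> a" "0 \<le> b" "a + b = 1"
  obtain v1 r1 v2 r2 where xz: "x = (v1, r1)" "z = (v2, r2)" by fastforce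
  have v1: "\<forall>y. v1$y \<in> C" "(\<Sum>y\<in>UNIV. f y (v1$y)) \<le> r1"
    and v2: "\<forall>y. v2$y \<in> C" "(\<Sum>y\<in>UNIV. f y (v2$y)) \<le> r2"
    using x z xz by (auto simp: sum_epigraph_def)
  have a: "a = 1 - b" using ab by simp
  have inC: "\<forall>y. (a *\<^sub>R v1 + b *\<^sub>R v2)$y \<in> C"
    using v1(1) v2(1) ab convex_on_imp_convex[OF cvx] by (simp add: convexD)
  have "(\<Sum>y\<in>UNIV. f y ((a *\<^sub>R v1 + b *\<^sub>R v2)$y))
        \<le> (\<Sum>y\<in>UNIV. a * f y (v1$y) + b * f y (v2$y))"
    using convex_onD[OF cvx] v1(1) v2(1) ab by (intro sum_mono) (simp add: a)
  also have "\<dots> \<le> a * r1 + b * r2"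
    using v1(2) v2(2) ab
    by (simp add: sum.distrib flip: sum_distrib_left) (intro add_mono mult_left_mono; simp)
  finally show "a *\<^sub>R x + b *\<^sub>R z \<in> sum_epigraph C f"
    using inC by (simp add: sum_epigraph_def xz)
qed

lemma convex_consensus_cylinder:
  assumes "subspace T"
  shows "convex (consensus_cylinder T F :: (('a::real_vector^'n::finite) \<times> real) set)"
  unfolding convex_def
proof (intro ballI allI impI)
  fix x z :: "('a^'n) \<times> real" and a b :: real
  assume x: "x \<in> consensus_cylinder T F" and z: "z \<in> consensus_cylinder T F"
    and ab: "0 \<le> a" "0 \<le> b" "a + b = 1"
  obtain v1 r1 v2 r2 where xz: "x = (v1, r1)" "z = (v2, r2)" by fastforce
  obtain u1 u2 where u: "\<forall>y. v1$y - u1 \<in> T" "\<forall>y. v2$y - u2 \<in> T" and r: "r1 < F" "r2 < F"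
    using x z xz by (auto simp: consensus_cylinder_def)
  have "(a *\<^sub>R v1 + b *\<^sub>R v2)$y - (a *\<^sub>R u1 + b *\<^sub>R u2) \<in> T" for y
  proof -
    have "(a *\<^sub>R v1 + b *\<^sub>R v2)$y - (a *\<^sub>R u1 + b *\<^sub>R u2) = a *\<^sub>R (v1$y - u1) + b *\<^sub>R (v2$y - u2)"
      by (simp add: algebra_simps)
    then show ?thesis using u assms by (simp add: subspace_add subspace_scale)
  qed
  moreover have "a * r1 + b * r2 < F"
  proof (cases "a = 0")
    case True then show ?thesis using ab r by simp
  next
    case False
    then have "a * r1 < a * F" using ab r by simp
    moreover have "b * r2 \<le> b * F" using ab r by (simp add: mult_left_mono)
    ultimately have "a * r1 + b * r2 < (a + b) * F" by (simp add: distrib_right)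
    then show ?thesis using ab by simp
  qed
  ultimately show "a *\<^sub>R x + b *\<^sub>R z \<in> consensus_cylinder T F"
    by (auto simp: consensus_cylinder_def xz)
qed

text \<open>If F is a lower bound of \<Sum>_y f_y on the diagonal, the epigraph does not meet the
  cylinder taken modulo the orthogonal complement of the direction space S of C:
  consensus modulo that complement forces genuine consensus inside C.\<close>
lemma sum_epigraph_consensus_cylinder_disjoint:
  fixes C :: "'a::euclidean_space set"
  assumes "subspace S" and CS: "\<And>u v. u \<in> C \<Longrightarrow> v \<in> C \<Longrightarrow> u - v \<in> S"
    and lowF: "\<And>u. u \<in> C \<Longrightarrow> F \<le> (\<Sum>y\<in>UNIV. f y u)"
  shows "sum_epigraph C f \<inter> consensus_cylinder (S\<^sup>\<bottom>) F = ({} :: (('a^'n::finite) \<times> real) set)"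
proof (rule ccontr)
  assume "sum_epigraph C f \<inter> consensus_cylinder (S\<^sup>\<bottom>) F \<noteq> ({} :: (('a^'n) \<times> real) set)"
  then obtain v :: "'a^'n" and r u where vC: "\<forall>y. v$y \<in> C" and Pr: "(\<Sum>y\<in>UNIV. f y (v$y)) \<le> r"
    and u: "\<forall>y. v$y - u \<in> S\<^sup>\<bottom>" and rF: "r < F"
    by (auto simp: sum_epigraph_def consensus_cylinder_def)
  fix y0 :: 'n
  have "v$y - v$y0 \<in> S \<inter> S\<^sup>\<bottom>" for y
    using CS vC subspace_diff[OF subspace_orthogonal_comp u[rule_format, of y] u[rule_format, of y0]]
    by simp
  then have "v$y = v$y0" for y using orthogonal_Int_0[OF assms(1)] by auto
  then have "(\<Sum>y\<in>UNIV. f y (v$y)) = (\<Sum>y\<in>UNIV. f y (v$y0))" by metis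
  then have "F \<le> (\<Sum>y\<in>UNIV. f y (v$y))" using lowF vC by simp
  then show False using Pr rF by simp
qed

lemma cylinder_separator_balanced:
  fixes Lam :: "'a::euclidean_space^'n::finite"
  assumes T: "subspace T"
    and sep: "\<And>v r. (v, r) \<in> consensus_cylinder T F \<Longrightarrow> b \<le> Lam \<bullet> v + \<beta> * r"
  shows "(\<Sum>y\<in>UNIV. Lam$y) = 0" and "Lam$y \<in> T\<^sup>\<bottom>"
proof -
  define sL where "sL = (\<Sum>y\<in>UNIV. Lam$y)"
  have "sL \<bullet> sL = 0"
  proof (rule slope_zero_of_lower_bound[of "b - \<beta> * (F - 1)"])
    fix t :: real
    have "((\<chi> y. t *\<^sub>R sL), F - 1) \<in> consensus_cylinder T F"
      using subspace_0[OF T] by (auto simp: consensus_cylinder_def intro!: exI[of _ "t *\<^sub>R sL"])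
    from sep[OF this] show "b - \<beta> * (F - 1) \<le> t * (sL \<bullet> sL)"
      by (simp add: inner_vec_const sL_def)
  qed
  then show "(\<Sum>y\<in>UNIV. Lam$y) = 0" by (simp add: sL_def)
  have "Lam$y \<bullet> s = 0" if "s \<in> T" for s
  proof (rule slope_zero_of_lower_bound[of "b - \<beta> * (F - 1)"])
    fix t :: real
    have "((\<chi> z. if z = y then t *\<^sub>R s else 0), F - 1) \<in> consensus_cylinder T F"
      using T that by (auto simp: consensus_cylinder_def subspace_scale subspace_0 intro!: exI[of _ 0])
    from sep[OF this] show "b - \<beta> * (F - 1) \<le> t * (Lam$y \<bullet> s)"
      by (simp add: inner_vec_single)
  qed
  then show "Lam$y \<in> T\<^sup>\<bottom>" by (simp add: orthogonal_comp_def orthogonal_def inner_commute)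
qed

lemma epigraph_separator_nonpos:
  assumes "(v0, r0) \<in> sum_epigraph C f"
    and sep: "\<And>v r. (v, r) \<in> sum_epigraph C f \<Longrightarrow> Lam \<bullet> v + \<beta> * r \<le> b"
  shows "\<beta> \<le> 0"
proof (rule slope_nonpos_of_upper_bound[of _ "b - Lam \<bullet> v0 - \<beta> * r0"])
  fix t :: real assume "t \<ge> 0"
  with assms(1) have "(v0, r0 + t) \<in> sum_epigraph C f" by (auto simp: sum_epigraph_def)
  from sep[OF this] show "t * \<beta> \<le> b - Lam \<bullet> v0 - \<beta> * r0" by (simp add: algebra_simps)
qed

text \<open>If it were (\<beta> = 0), it would pass
  through the diagonal point at a relative interior point u0 of C, and C^n would lie on
  one side of it; moving a single coordinate within C around u0 then forces every
  component of the normal, which lies in the direction space of C, to vanish.\<close>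
lemma separator_non_vertical:
  fixes C :: "'a::euclidean_space set" and u0 :: 'a and Lam :: "'a^'n::finite"
  defines "S \<equiv> span ((\<lambda>x. x - u0) ` C)"
  assumes u0: "u0 \<in> rel_interior C" and nonzero: "(Lam, \<beta>) \<noteq> 0"
    and sum0: "(\<Sum>y\<in>UNIV. Lam$y) = 0" and LamS: "\<And>y. Lam$y \<in> S"
    and sepA: "\<And>v r. (v, r) \<in> sum_epigraph C f \<Longrightarrow> Lam \<bullet> v + \<beta> * r \<le> b"
    and sepB: "\<And>v r. (v, r) \<in> consensus_cylinder (S\<^sup>\<bottom>) F \<Longrightarrow> b \<le> Lam \<bullet> v + \<beta> * r"
  shows "\<beta> \<noteq> 0"
proof
  assume \<beta>0: "\<beta> = 0"
  have u0C: "u0 \<in> C" using u0 rel_interior_subset by auto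
  have "((\<chi> y. u0), F - 1) \<in> consensus_cylinder (S\<^sup>\<bottom>) F"
    by (auto simp: consensus_cylinder_def subspace_0 subspace_orthogonal_comp intro!: exI[of _ u0])
  from sepB[OF this] have "b \<le> 0" using \<beta>0 sum0 by (simp add: inner_vec_const)
  then have small: "Lam$y \<bullet> \<delta> \<le> 0" if "\<delta> \<in> S" "norm \<delta> < e"
    and e: "\<And>\<delta>. \<delta> \<in> S \<Longrightarrow> norm \<delta> < e \<Longrightarrow> u0 + \<delta> \<in> C" for y \<delta> e
  proof -
    define v where "v = (\<chi> z. u0) + (\<chi> z. if z = y then \<delta> else 0)"
    have "(v, \<Sum>z\<in>UNIV. f z (v$z)) \<in> sum_epigraph C f"
      using e[OF that(1,2)] u0C by (simp add: sum_epigraph_def v_def)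
    from sepA[OF this] show ?thesis
      using \<beta>0 sum0 \<open>b \<le> 0\<close> by (simp add: v_def inner_add_right inner_vec_const inner_vec_single)
  qed
  obtain e where e: "e > 0" "\<And>\<delta>. \<delta> \<in> S \<Longrightarrow> norm \<delta> < e \<Longrightarrow> u0 + \<delta> \<in> C"
    using rel_interior_ball_span[OF u0] unfolding S_def by blast
  have "Lam$y \<bullet> Lam$y = 0" for y
    by (rule inner_nonpos_near_zero_imp_zero[OF _ e(1) small LamS]) (auto simp: S_def e(2))
  then have "Lam = 0" by (simp add: vec_eq_iff)
  then show False using nonzero \<beta>0 by (simp add: zero_prod_def)
qed

lemma diff_in_direction_space:
  assumes "u \<in> C" "v \<in> C"
  shows "u - v \<in> span ((\<lambda>x. x - u0) ` C)"
proof -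
  have "u - u0 \<in> span ((\<lambda>x. x - u0) ` C)" "v - u0 \<in> span ((\<lambda>x. x - u0) ` C)"
    using assms by (auto intro: span_base)
  then have "(u - u0) - (v - u0) \<in> span ((\<lambda>x. x - u0) ` C)" by (rule span_diff)
  then show ?thesis by simp
qed

lemma consensus_separator:
  fixes C :: "'a::euclidean_space set" and u0 :: 'a and f :: "'n::finite \<Rightarrow> 'a \<Rightarrow> real"
  defines "S \<equiv> span ((\<lambda>x. x - u0) ` C)"
  assumes u0: "u0 \<in> rel_interior C" and cvx: "\<And>y. convex_on C (f y)"
    and lowF: "\<And>u. u \<in> C \<Longrightarrow> F \<le> (\<Sum>y\<in>UNIV. f y u)"
  obtains Lam :: "'a^'n" and \<beta> b where "(\<Sum>y\<in>UNIV. Lam$y) = 0" "\<And>y. Lam$y \<in> S" "\<beta> < 0"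
    "\<And>v r. (v, r) \<in> sum_epigraph C f \<Longrightarrow> Lam \<bullet> v + \<beta> * r \<le> b"
    "\<And>v r. (v, r) \<in> consensus_cylinder (S\<^sup>\<bottom>) F \<Longrightarrow> b \<le> Lam \<bullet> v + \<beta> * r"
proof -
  have u0C: "u0 \<in> C" using u0 rel_interior_subset by auto
  define A :: "(('a^'n) \<times> real) set" where "A = sum_epigraph C f"
  define B :: "(('a^'n) \<times> real) set" where "B = consensus_cylinder (S\<^sup>\<bottom>) F"
  have diagA: "((\<chi> y. u0), \<Sum>y\<in>UNIV. f y u0) \<in> A" using u0C by (simp add: A_def sum_epigraph_def)
  have "((\<chi> y. u0), F - 1) \<in> B"
    by (auto simp: B_def consensus_cylinder_def subspace_0 subspace_orthogonal_comp intro!: exI[of _ u0])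
  then have "A \<noteq> {}" "B \<noteq> {}" using diagA by auto
  moreover have "convex A" "convex B"
    unfolding A_def B_def
    by (rule convex_sum_epigraph[OF cvx], rule convex_consensus_cylinder[OF subspace_orthogonal_comp])
  moreover have "A \<inter> B = {}"
    unfolding A_def B_def S_def
    by (rule sum_epigraph_consensus_cylinder_disjoint[OF _ diff_in_direction_space lowF]) simp_all
  ultimately obtain a b where ab: "a \<noteq> 0" "\<forall>x\<in>A. a \<bullet> x \<le> b" "\<forall>x\<in>B. b \<le> a \<bullet> x"
    using separating_hyperplane_sets[of A B] by blast
  obtain Lam \<beta> where a: "a = (Lam, \<beta>)" by fastforce
  have sepA: "\<And>v r. (v, r) \<in> sum_epigraph C f \<Longrightarrow> Lam \<bullet> v + \<beta> * r \<le> b"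
    using ab(2) a by (auto simp: A_def)
  have sepB: "\<And>v r. (v, r) \<in> consensus_cylinder (S\<^sup>\<bottom>) F \<Longrightarrow> b \<le> Lam \<bullet> v + \<beta> * r"
    using ab(3) a by (auto simp: B_def)
  have sum0: "(\<Sum>y\<in>UNIV. Lam$y) = 0" and "\<And>y. Lam$y \<in> S\<^sup>\<bottom>\<^sup>\<bottom>"
    using cylinder_separator_balanced[OF subspace_orthogonal_comp[of S] sepB] by auto
  then have LamS: "\<And>y. Lam$y \<in> S" by (simp add: S_def orthogonal_comp_self)
  have "\<beta> \<le> 0" using epigraph_separator_nonpos[OF diagA[unfolded A_def] sepA] .
  moreover have "\<beta> \<noteq> 0"
    using separator_non_vertical[OF u0 _ sum0 _ sepA] ab(1) a LamS sepB unfolding S_def by blast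
  ultimately have "\<beta> < 0" by simp
  from that[OF sum0 LamS this sepA sepB] show ?thesis .
qed

lemma consensus_multipliers:
  fixes C :: "'a::euclidean_space set" and f :: "'n::finite \<Rightarrow> 'a \<Rightarrow> real"
  assumes u0: "u0 \<in> rel_interior C" and cvx: "\<And>y. convex_on C (f y)"
    and lowF: "\<And>u. u \<in> C \<Longrightarrow> F \<le> (\<Sum>y\<in>UNIV. f y u)"
  obtains lam :: "'n \<Rightarrow> 'a" where "sum lam UNIV = 0" "\<And>y. lam y \<in> span ((\<lambda>x. x - u0) ` C)"
    "\<And>v. (\<And>y. v y \<in> C) \<Longrightarrow> F \<le> (\<Sum>y\<in>UNIV. f y (v y) - lam y \<bullet> v y)"
proof -
  obtain Lam :: "'a^'n" and \<beta> b where sum0: "(\<Sum>y\<in>UNIV. Lam$y) = 0"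
    and LamS: "\<And>y. Lam$y \<in> span ((\<lambda>x. x - u0) ` C)" and \<beta>neg: "\<beta> < 0"
    and sepA: "\<And>v r. (v, r) \<in> sum_epigraph C f \<Longrightarrow> Lam \<bullet> v + \<beta> * r \<le> b"
    and sepB: "\<And>v r. (v, r) \<in> consensus_cylinder (span ((\<lambda>x. x - u0) ` C)\<^sup>\<bottom>) F \<Longrightarrow> b \<le> Lam \<bullet> v + \<beta> * r"
    using consensus_separator[OF u0 cvx lowF] by blast
  define \<gamma> where "\<gamma> = - \<beta>"
  have \<gamma>pos: "\<gamma> > 0" using \<beta>neg by (simp add: \<gamma>_def)
  have Fb: "F \<le> - b / \<gamma>"
  proof (rule dense_le)
    fix r assume "r < F"
    then have "((\<chi> y. u0), r) \<in> consensus_cylinder (span ((\<lambda>x. x - u0) ` C)\<^sup>\<bottom>) F"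
      by (auto simp: consensus_cylinder_def subspace_0 subspace_orthogonal_comp intro!: exI[of _ u0])
    from sepB[OF this] show "r \<le> - b / \<gamma>"
      using sum0 \<gamma>pos by (simp add: inner_vec_const \<gamma>_def neg_le_divide_eq mult.commute)
  qed
  show ?thesis
  proof
    show "sum (\<lambda>y. (1 / \<gamma>) *\<^sub>R Lam$y) UNIV = 0" using sum0 by (simp flip: scaleR_sum_right)
    show "(1 / \<gamma>) *\<^sub>R Lam$y \<in> span ((\<lambda>x. x - u0) ` C)" for y
      using LamS[of y] by (simp add: span_scale)
  next
    fix v :: "'n \<Rightarrow> 'a" assume vC: "\<And>y. v y \<in> C"
    define P where "P = (\<Sum>y\<in>UNIV. f y (v y))"
    have "Lam \<bullet> (\<chi> y. v y) + \<beta> * P \<le> b" using vC by (intro sepA) (simp add: sum_epigraph_def P_def)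
    then have "- b / \<gamma> \<le> P - (1 / \<gamma>) * (Lam \<bullet> (\<chi> y. v y))"
      using \<gamma>pos by (simp add: field_simps \<gamma>_def)
    also have "\<dots> = (\<Sum>y\<in>UNIV. f y (v y) - ((1 / \<gamma>) *\<^sub>R Lam$y) \<bullet> v y)"
      by (simp add: P_def inner_vec_def sum_subtractf sum_distrib_left)
    finally show "F \<le> (\<Sum>y\<in>UNIV. f y (v y) - ((1 / \<gamma>) *\<^sub>R Lam$y) \<bullet> v y)" using Fb by simp
  qed
qed

text \<open>If \<Sum>_y h_y(v_y) \<ge> F for all v \<in> C^n, then any point u of C with \<Sum>_y h_y(u) < F + \<epsilon>
  minimizes each h_y separately up to \<epsilon>: changing only the y-th coordinate cannot gain
  more than the slack.\<close>
lemma decoupled_near_minimizer: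
  fixes h :: "'n::finite \<Rightarrow> 'a \<Rightarrow> real"
  assumes low: "\<And>v. (\<And>y. v y \<in> C) \<Longrightarrow> F \<le> (\<Sum>y\<in>UNIV. h y (v y))"
    and u: "u \<in> C" and near: "(\<Sum>y\<in>UNIV. h y u) < F + \<epsilon>" and w: "w \<in> C"
  shows "h y u \<le> h y w + \<epsilon>"
proof -
  define v where "v = (\<lambda>z. if z = y then w else u)"
  have "F \<le> (\<Sum>z\<in>UNIV. h z (v z))" using low u w by (simp add: v_def)
  also have "\<dots> = (\<Sum>z\<in>UNIV. h z u + (if z = y then h y w - h y u else 0))"
    by (rule sum.cong) (auto simp: v_def)
  also have "\<dots> = (\<Sum>z\<in>UNIV. h z u) + (h y w - h y u)"
    by (simp add: sum.distrib)
  finally show ?thesis using near by simp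
qed

text \<open>Calibration at a weight q: if a sequence approaches the infimum of q \<bullet> \<psi> and
  predicts t infinitely often, then t is optimal for q, because non-optimal
  predictions are bounded away from the infimum.\<close>
lemma calibration_limit_prediction:
  fixes g :: "'a \<Rightarrow> real" and useq :: "nat \<Rightarrow> 'a"
  assumes gap: "(INF u\<in>C. ereal (g u)) < (INF u\<in>{u\<in>C. pred u \<notin> X}. ereal (g u))"
    and useqC: "\<And>j. useq j \<in> C"
    and near: "\<And>j w. w \<in> C \<Longrightarrow> g (useq j) \<le> g w + R / real (Suc j)"
    and inf: "infinite {j. pred (useq j) = t}"
  shows "t \<in> X"
proof (rule ccontr)
  assume tX: "t \<notin> X"
  define I where "I = (INF u\<in>C. ereal (g u))"
  define bad where "bad = (INF u\<in>{u\<in>C. pred u \<notin> X}. ereal (g u))"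
  have bad_le: "bad \<le> ereal (g (useq j))" if "pred (useq j) = t" for j
    unfolding bad_def using that tX useqC by (auto intro!: INF_lower)
  have I_ge: "ereal (g (useq j) - R / real (Suc j)) \<le> I" for j
    unfolding I_def by (rule INF_greatest) (use near in \<open>force simp: algebra_simps\<close>)
  have "{j. pred (useq j) = t} \<noteq> {}" using inf by (metis finite.emptyI)
  then obtain j1 where j1: "pred (useq j1) = t" by blast
  have Ibad: "I < bad" using gap by (simp add: I_def bad_def)
  obtain i where Ii: "I = ereal i" using I_ge[of j1] Ibad bad_le[OF j1] by (cases I) auto
  obtain bb where bbb: "bad = ereal bb" using bad_le[OF j1] Ibad Ii by (cases bad) auto
  have ib: "i < bb" using Ibad Ii bbb by simp
  obtain j where j: "pred (useq j) = t" and jbig: "j > nat \<lceil>R / (bb - i)\<rceil>"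
    using inf unfolding infinite_nat_iff_unbounded by blast
  have "R / (bb - i) < real (Suc j)" using jbig by linarith
  then have "R / real (Suc j) < bb - i" using ib by (simp add: divide_less_eq mult.commute)
  moreover have "bb \<le> g (useq j)" using bad_le[OF j] bbb by simp
  moreover have "g (useq j) - R / real (Suc j) \<le> i" using I_ge[of j] Ii by simp
  ultimately show False by linarith
qed

lemma relint_prob_simplex_perturb:
  assumes p: "p \<in> relint_prob_simplex" and w: "(\<Sum>y\<in>UNIV. w$y) = 0"
  obtains \<epsilon> where "\<epsilon> > 0" "\<And>\<delta>. \<bar>\<delta>\<bar> \<le> \<epsilon> \<Longrightarrow> p + \<delta> *\<^sub>R w \<in> prob_simplex"
proof
  have ppos: "\<And>y. 0 < p$y" and psum: "(\<Sum>y\<in>UNIV. p$y) = 1"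
    using p by (auto simp: relint_prob_simplex_def)
  define m where "m = Min (range (\<lambda>y. p$y))"
  have m: "m > 0" "\<And>y. m \<le> p$y" unfolding m_def using ppos by (auto intro: Min_le)
  define M where "M = (\<Sum>y\<in>UNIV. \<bar>w$y\<bar>)"
  have M: "0 \<le> M" "\<And>y. \<bar>w$y\<bar> \<le> M" unfolding M_def by (auto intro: sum_nonneg member_le_sum)
  show "m / (M + 1) > 0" using m M by simp
  fix \<delta> :: real assume \<delta>: "\<bar>\<delta>\<bar> \<le> m / (M + 1)"
  have "\<bar>\<delta> * w$y\<bar> \<le> p$y" for y
  proof -
    have "\<bar>\<delta> * w$y\<bar> \<le> m / (M + 1) * M"
      unfolding abs_mult using \<delta> M by (intro mult_mono) auto
    also have "\<dots> \<le> m" using m M by (simp add: field_simps)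
    finally show ?thesis using m(2)[of y] by simp
  qed
  then have "\<And>y. 0 \<le> p$y + \<delta> * w$y" by (smt (verit))
  moreover have "(\<Sum>y\<in>UNIV. p$y + \<delta> * w$y) = 1"
    using psum w by (simp add: sum.distrib flip: sum_distrib_left)
  ultimately show "p + \<delta> *\<^sub>R w \<in> prob_simplex" by (simp add: prob_simplex_def)
qed

lemma optimal_under_both_tilts:
  fixes L :: "real^'k^'n"
  assumes pc: "\<And>s. p \<bullet> column s L = c" and \<epsilon>: "\<epsilon> > 0"
    and plus: "t \<in> argmin_loss L (p + \<epsilon> *\<^sub>R w)" and minus: "t \<in> argmin_loss L (p + (- \<epsilon>) *\<^sub>R w)"
  shows "w \<bullet> column s L = w \<bullet> column t L"
proof -
  have "\<epsilon> * (w \<bullet> column t L) \<le> \<epsilon> * (w \<bullet> column s L)"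
    using plus pc by (simp add: argmin_loss_def inner_add_left)
  moreover have "- \<epsilon> * (w \<bullet> column t L) \<le> - \<epsilon> * (w \<bullet> column s L)"
    using minus pc by (simp add: argmin_loss_def inner_diff_left)
  ultimately show ?thesis using \<epsilon> by (simp add: mult_le_cancel_left)
qed

text \<open>A set on which every vector of the orthogonal complement of A is constant has
  affine dimension at most dim A: its differences all lie in the span of A.\<close>
lemma aff_dim_le_dim_of_constant_on:
  fixes X A :: "'a::euclidean_space set"
  assumes const: "\<And>w x y. w \<in> A\<^sup>\<bottom> \<Longrightarrow> x \<in> X \<Longrightarrow> y \<in> X \<Longrightarrow> w \<bullet> x = w \<bullet> y"
  shows "aff_dim X \<le> int (dim A)"
proof (cases "X = {}")
  case False
  then obtain x0 where x0: "x0 \<in> X" by blast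
  have "w \<bullet> (x - x0) = 0" if "w \<in> A\<^sup>\<bottom>" "x \<in> X" for w x
    using const[OF that x0] by (simp add: inner_diff_right)
  then have "(\<lambda>x. x - x0) ` X \<subseteq> A\<^sup>\<bottom>\<^sup>\<bottom>"
    by (auto simp: orthogonal_comp_def orthogonal_def inner_commute)
  then have "dim ((\<lambda>x. x - x0) ` X) \<le> dim (span A)"
    unfolding orthogonal_comp_orthogonal_comp by (rule dim_subset)
  moreover have "aff_dim X = int (dim ((\<lambda>x. x - x0) ` X))"
    using x0 by (simp add: aff_dim_eq_dim_subtract hull_inc)
  ultimately show ?thesis by simp
qed simp

text \<open>For multipliers \<lambda>_y and a positive weight p,
  a tilt w of p preserves the multiplier identity \<Sum>_y (q_y / p_y) \<lambda>_y = 0 exactly when w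
  is orthogonal to the vectors (\<lambda>_y \<bullet> b / p_y)_y, b in the direction space.\<close>
definition tilt_normal :: "real^'n::finite \<Rightarrow> ('n \<Rightarrow> 'a::real_inner) \<Rightarrow> 'a \<Rightarrow> real^'n" where
  "tilt_normal p lam b = (\<chi> y. (lam y \<bullet> b) / p$y)"

lemma dim_tilt_normals:
  fixes S :: "'a::euclidean_space set"
  shows "dim (insert 1 (tilt_normal p lam ` S)) \<le> 1 + dim S"
proof -
  have "linear (tilt_normal p lam)"
    by (auto simp: linear_iff tilt_normal_def vec_eq_iff inner_add_right add_divide_distrib)
  then have "dim (tilt_normal p lam ` S) \<le> dim S" by (rule dim_image_le)
  then show ?thesis by (simp add: dim_insert)
qed

lemma orthogonal_tilt_normals:
  fixes lam :: "'n::finite \<Rightarrow> 'a::euclidean_space"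
  assumes w: "w \<in> (insert 1 (tilt_normal p lam ` S))\<^sup>\<bottom>" and S: "subspace S"
    and lamS: "\<And>y. lam y \<in> S"
  shows "(\<Sum>y\<in>UNIV. w$y) = 0" and "(\<Sum>y\<in>UNIV. (w$y / p$y) *\<^sub>R lam y) = 0"
proof -
  show "(\<Sum>y\<in>UNIV. w$y) = 0"
    using w by (simp add: orthogonal_comp_def orthogonal_def inner_vec_def)
  define g where "g = (\<Sum>y\<in>UNIV. (w$y / p$y) *\<^sub>R lam y)"
  have "g \<in> S" unfolding g_def using S lamS by (intro subspace_sum subspace_scale) auto
  moreover have "tilt_normal p lam b \<bullet> w = g \<bullet> b" for b
    by (simp add: tilt_normal_def g_def inner_vec_def inner_sum_left mult.commute)
  then have "g \<in> S\<^sup>\<bottom>"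
    using w by (simp add: orthogonal_comp_def orthogonal_def inner_commute)
  ultimately show "(\<Sum>y\<in>UNIV. (w$y / p$y) *\<^sub>R lam y) = 0"
    using orthogonal_Int_0[OF S] by (auto simp: g_def)
qed

lemma weighted_objective_decoupled:
  fixes psi :: "'a::real_inner \<Rightarrow> real^'n::finite" and lam :: "'n \<Rightarrow> 'a"
  assumes ppos: "\<And>y. 0 < p$y" and qlam: "(\<Sum>y\<in>UNIV. (q$y / p$y) *\<^sub>R lam y) = 0"
  shows "q \<bullet> psi u = (\<Sum>y\<in>UNIV. (q$y / p$y) * (p$y * psi u $ y - lam y \<bullet> u))"
proof -
  have "(\<Sum>y\<in>UNIV. (q$y / p$y) * (p$y * psi u $ y - lam y \<bullet> u))
        = (\<Sum>y\<in>UNIV. q$y * psi u $ y) - (\<Sum>y\<in>UNIV. (q$y / p$y) *\<^sub>R lam y) \<bullet> u"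
    using ppos by (simp add: right_diff_distrib sum_subtractf inner_sum_left less_imp_neq[THEN not_sym])
  then show ?thesis using qlam by (simp add: inner_vec_def)
qed

text \<open>Take multipliers \<lambda> for the problem min_u p \<bullet> \<psi>(u) and a
  minimizing sequence u_j; by the multiplier property each u_j nearly minimizes every
  decoupled term p_y \<psi>_y(u) - \<lambda>_y \<bullet> u, hence also q \<bullet> \<psi> for every weight q with
  \<Sum>_y (q_y / p_y) \<lambda>_y = 0. A prediction t made infinitely often along the sequence is
  therefore optimal for all these q, by calibration.\<close>
lemma common_optimal_prediction:
  fixes L :: "real^'k^'n" and psi :: "'a::real_inner \<Rightarrow> real^'n" and lam :: "'n \<Rightarrow> 'a"
    and pred :: "'a \<Rightarrow> 'k"
  assumes ppos: "\<And>y. 0 < p$y" and lam0: "sum lam UNIV = 0"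
    and lamF: "\<And>v. (\<And>y. v y \<in> C) \<Longrightarrow> F \<le> (\<Sum>y\<in>UNIV. p$y * psi (v y) $ y - lam y \<bullet> v y)"
    and approx: "\<And>e. e > 0 \<Longrightarrow> \<exists>u\<in>C. p \<bullet> psi u < F + e"
    and cal: "\<forall>q\<in>prob_simplex. (INF u\<in>{u\<in>C. pred u \<notin> argmin_loss L q}. ereal (q \<bullet> psi u))
                 > (INF u\<in>C. ereal (q \<bullet> psi u))"
  obtains t where "\<And>q. q \<in> prob_simplex \<Longrightarrow> (\<Sum>y\<in>UNIV. (q$y / p$y) *\<^sub>R lam y) = 0 \<Longrightarrow>
    t \<in> argmin_loss L q"
proof -
  define h where "h = (\<lambda>y u. p$y * psi u $ y - lam y \<bullet> u)"
  have sumh: "(\<Sum>y\<in>UNIV. h y u) = p \<bullet> psi u" for u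
    by (simp add: h_def sum_subtractf inner_vec_def lam0 flip: inner_sum_left)
  obtain useq where useqC: "\<And>j. useq j \<in> C" and useqF: "\<And>j. p \<bullet> psi (useq j) < F + 1 / real (Suc j)"
    using approx[of "1 / real (Suc _)"] by (metis of_nat_0_less_iff zero_less_Suc zero_less_divide_1_iff)
  have near_h: "h y (useq j) \<le> h y w + 1 / real (Suc j)" if "w \<in> C" for y j w
    by (rule decoupled_near_minimizer[where F = F]) (use lamF useqC useqF sumh that in \<open>auto simp: h_def\<close>)
  obtain t where inf: "infinite {j. pred (useq j) = t}"
    using pigeonhole_infinite[OF infinite_UNIV_nat, of "pred \<circ> useq"] by auto
  show ?thesis
  proof
    fix q assume q: "q \<in> prob_simplex" and qlam: "(\<Sum>y\<in>UNIV. (q$y / p$y) *\<^sub>R lam y) = 0"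
    have qnn: "\<And>y. 0 \<le> q$y / p$y" using q ppos by (auto simp: prob_simplex_def less_imp_le)
    have qh: "q \<bullet> psi u = (\<Sum>y\<in>UNIV. (q$y / p$y) * h y u)" for u
      unfolding h_def by (rule weighted_objective_decoupled[OF ppos qlam])
    have near: "q \<bullet> psi (useq j) \<le> q \<bullet> psi w + (\<Sum>y\<in>UNIV. q$y / p$y) / real (Suc j)"
      if "w \<in> C" for j w
    proof -
      have "(\<Sum>y\<in>UNIV. (q$y / p$y) * h y (useq j)) \<le> (\<Sum>y\<in>UNIV. (q$y / p$y) * (h y w + 1 / real (Suc j)))"
        using near_h[OF that] qnn by (intro sum_mono mult_left_mono) auto
      then show ?thesis by (simp add: qh distrib_left sum.distrib sum_divide_distrib)
    qed
    have gap: "(INF u\<in>C. ereal (q \<bullet> psi u))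
               < (INF u\<in>{u\<in>C. pred u \<notin> argmin_loss L q}. ereal (q \<bullet> psi u))"
      using cal q by blast
    show "t \<in> argmin_loss L q"
      using calibration_limit_prediction[where g = "\<lambda>u. q \<bullet> psi u", OF gap useqC near inf] .
  qed
qed

text \<open>If t is optimal for every weight q satisfying the multiplier identity, then every
  admissible tilt direction w (orthogonal to 1 and to all tilt normals) is constant on
  the columns of L: p \<plusminus> \<epsilon>w are such weights for small \<epsilon>, and p ties all columns.\<close>
lemma tilt_invariant_columns:
  fixes L :: "real^'k^'n" and lam :: "'n \<Rightarrow> 'a::euclidean_space"
  assumes p: "p \<in> relint_prob_simplex" and pc: "\<And>s. p \<bullet> column s L = c"
    and lam0: "sum lam UNIV = 0" and S: "subspace S" and lamS: "\<And>y. lam y \<in> S"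
    and t: "\<And>q. q \<in> prob_simplex \<Longrightarrow> (\<Sum>y\<in>UNIV. (q$y / p$y) *\<^sub>R lam y) = 0 \<Longrightarrow>
      t \<in> argmin_loss L q"
    and w: "w \<in> (insert 1 (tilt_normal p lam ` S))\<^sup>\<bottom>"
  shows "w \<bullet> column s L = w \<bullet> column t L"
proof -
  have ppos: "\<And>y. 0 < p$y" using p by (auto simp: relint_prob_simplex_def)
  note tilt = orthogonal_tilt_normals[OF w S lamS]
  obtain \<epsilon> where \<epsilon>: "\<epsilon> > 0" "\<And>\<delta>. \<bar>\<delta>\<bar> \<le> \<epsilon> \<Longrightarrow> p + \<delta> *\<^sub>R w \<in> prob_simplex"
    using relint_prob_simplex_perturb[OF p tilt(1)] by blast
  have opt: "t \<in> argmin_loss L (p + \<delta> *\<^sub>R w)" if "\<bar>\<delta>\<bar> = \<epsilon>" for \<delta>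
  proof (rule t)
    show "p + \<delta> *\<^sub>R w \<in> prob_simplex" using \<epsilon>(2) that by simp
    have "(\<Sum>y\<in>UNIV. ((p + \<delta> *\<^sub>R w)$y / p$y) *\<^sub>R lam y)
          = sum lam UNIV + \<delta> *\<^sub>R (\<Sum>y\<in>UNIV. (w$y / p$y) *\<^sub>R lam y)"
      using ppos by (simp add: add_divide_distrib scaleR_add_left sum.distrib scaleR_sum_right
          less_imp_neq[THEN not_sym])
    then show "(\<Sum>y\<in>UNIV. ((p + \<delta> *\<^sub>R w)$y / p$y) *\<^sub>R lam y) = 0" using lam0 tilt(2) by simp
  qed
  have "t \<in> argmin_loss L (p + \<epsilon> *\<^sub>R w)" "t \<in> argmin_loss L (p + (- \<epsilon>) *\<^sub>R w)"
    by (rule opt, use \<epsilon>(1) in simp)+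
  then show ?thesis by (rule optimal_under_both_tilts[OF pc \<epsilon>(1)])
qed

text \<open>The admissible tilts of p form a space
  whose orthogonal complement has dimension at most 1 + aff_dim C, and the common
  optimal prediction t makes every admissible tilt constant on the columns.\<close>
theorem calibrated_surrogate_aff_dim_bound:
  fixes L :: "real^'k^'n" and C :: "'a::euclidean_space set" and psi :: "'a \<Rightarrow> real^'n"
    and pred :: "'a \<Rightarrow> 'k"
  assumes ne: "C \<noteq> {}" and cvx: "\<And>y. convex_on C (\<lambda>u. psi u $ y)"
    and nn: "\<And>u y. u \<in> C \<Longrightarrow> 0 \<le> psi u $ y"
    and p: "p \<in> relint_prob_simplex" and pc: "\<And>t. p \<bullet> column t L = c"
    and cal: "\<forall>q\<in>prob_simplex. (INF u\<in>{u\<in>C. pred u \<notin> argmin_loss L q}. ereal (q \<bullet> psi u))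
                 > (INF u\<in>C. ereal (q \<bullet> psi u))"
  shows "aff_dim (range (\<lambda>t. column t L)) \<le> 1 + aff_dim C"
proof -
  have ppos: "\<And>y. 0 < p$y" using p by (auto simp: relint_prob_simplex_def)
  have "rel_interior C \<noteq> {}"
    using ne by (simp add: rel_interior_eq_empty convex_on_imp_convex[OF cvx])
  then obtain u0 where u0: "u0 \<in> rel_interior C" by blast
  then have u0C: "u0 \<in> C" using rel_interior_subset by blast
  define S where "S = span ((\<lambda>x. x - u0) ` C)"
  have S: "subspace S" by (simp add: S_def)
  define F where "F = Inf ((\<lambda>u. p \<bullet> psi u) ` C)"
  have bdd: "bdd_below ((\<lambda>u. p \<bullet> psi u) ` C)"
    using nn ppos by (intro bdd_belowI[of _ 0]) (auto simp: inner_vec_def less_imp_le intro!: sum_nonneg)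
  have lowF: "F \<le> (\<Sum>y\<in>UNIV. p$y * psi u $ y)" if "u \<in> C" for u
    using cInf_lower[OF _ bdd] that by (simp add: F_def inner_vec_def)
  have approx: "\<exists>u\<in>C. p \<bullet> psi u < F + e" if "e > 0" for e
    using cInf_lessD[of "(\<lambda>u. p \<bullet> psi u) ` C" "F + e"] ne that by (auto simp: F_def)
  have cvx_p: "convex_on C (\<lambda>u. p$y * psi u $ y)" for y
    using ppos[of y] by (intro convex_on_cmul cvx) simp
  obtain lam where lam0: "sum lam UNIV = 0" and lamS: "\<And>y. lam y \<in> S"
    and lamF: "\<And>v. (\<And>y. v y \<in> C) \<Longrightarrow> F \<le> (\<Sum>y\<in>UNIV. p$y * psi (v y) $ y - lam y \<bullet> v y)"
    using consensus_multipliers[OF u0 cvx_p lowF] unfolding S_def by blast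
  obtain t where t: "\<And>q. q \<in> prob_simplex \<Longrightarrow> (\<Sum>y\<in>UNIV. (q$y / p$y) *\<^sub>R lam y) = 0 \<Longrightarrow>
      t \<in> argmin_loss L q"
    using common_optimal_prediction[OF ppos lam0 lamF approx cal] by blast
  have const: "w \<bullet> column s L = w \<bullet> column t L"
    if "w \<in> (insert 1 (tilt_normal p lam ` S))\<^sup>\<bottom>" for w s
    using tilt_invariant_columns[OF p pc lam0 S lamS t that] .
  have "aff_dim (range (\<lambda>t. column t L)) \<le> int (dim (insert 1 (tilt_normal p lam ` S)))"
    by (rule aff_dim_le_dim_of_constant_on) (metis const rangeE)
  also have "\<dots> \<le> 1 + int (dim S)" using dim_tilt_normals[of p lam S] by simp
  also have "int (dim S) = aff_dim C"
    unfolding S_def dim_span by (rule aff_dim_eq_dim_subtract[symmetric]) (simp add: hull_inc u0C)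
  finally show ?thesis .
qed

lemma obtain_coordinate_numbering:
  obtains ii :: "'n::finite \<Rightarrow> nat" where "bij_betw ii UNIV {..<CARD('n)}"
proof -
  obtain hh where "bij_betw hh {0..<CARD('n)} (UNIV :: 'n set)"
    using ex_bij_betw_nat_finite[of "UNIV :: 'n set"] by auto
  then have "bij_betw (inv_into {0..<CARD('n)} hh) UNIV {..<CARD('n)}"
    by (simp add: bij_betw_inv_into atLeast0LessThan)
  then show ?thesis by (rule that)
qed

lemma aff_dim_le_vanishing_coordinates:
  fixes X :: "(real^'n::finite) set" and ii :: "'n \<Rightarrow> nat"
  assumes ii: "inj ii" and X: "\<And>x i. x \<in> X \<Longrightarrow> d \<le> ii i \<Longrightarrow> x$i = 0"
  shows "aff_dim X \<le> int d"
proof -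
  define dd :: "(real^'n) set" where "dd = (\<lambda>i. axis i 1) ` {i. ii i < d}"
  have ddB: "dd \<subseteq> Basis" by (auto simp: dd_def Basis_vec_def)
  define V where "V = {x::real^'n. \<forall>b\<in>Basis. b \<notin> dd \<longrightarrow> x \<bullet> b = 0}"
  have "X \<subseteq> V"
  proof
    fix x assume "x \<in> X"
    have "x \<bullet> axis i 1 = 0" if "axis i 1 \<notin> dd" for i
    proof -
      have "d \<le> ii i" using that unfolding dd_def by (metis (mono_tags) imageI mem_Collect_eq not_le)
      then show ?thesis using X[OF \<open>x \<in> X\<close>] by (simp add: inner_axis)
    qed
    then show "x \<in> V" by (auto simp: V_def Basis_vec_def)
  qed
  then have "aff_dim X \<le> aff_dim V" by (rule aff_dim_subset)
  also have "aff_dim V = int (card dd)"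
    using dim_substandard[OF ddB] subspace_substandard[of "\<lambda>b. b \<notin> dd"]
    by (simp add: V_def aff_dim_subspace)
  also have "card dd \<le> card {i. ii i < d}" unfolding dd_def by (rule card_image_le) simp
  also have "\<dots> \<le> card {..<d}"
    by (rule card_inj_on_le[of ii]) (use ii in \<open>auto simp: inj_on_def\<close>)
  finally show ?thesis by simp
qed

lemma convex_image_comb_linear:
  assumes C: "convex_set C"
    and ecomb: "\<And>\<theta> u v. e (comb \<theta> u v) = \<theta> *\<^sub>R e u + (1 - \<theta>) *\<^sub>R e v"
  shows "convex (e ` C)"
  unfolding convex_def
proof (intro ballI allI impI)
  fix x z and a b :: real
  assume "x \<in> e ` C" "z \<in> e ` C" "0 \<le> a" "0 \<le> b" "a + b = 1"
  then obtain u v where "u \<in> C" "v \<in> C" "x = e u" "z = e v" "b = 1 - a" "a \<le> 1" by auto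
  moreover have "comb a u v \<in> C" using C calculation \<open>0 \<le> a\<close> by (simp add: convex_set_def)
  ultimately show "a *\<^sub>R x + b *\<^sub>R z \<in> e ` C" by (metis ecomb image_eqI)
qed

lemma convex_on_image_comb_linear:
  assumes C: "convex_set C" and f: "convex_fun_on C f"
    and ecomb: "\<And>\<theta> u v. e (comb \<theta> u v) = \<theta> *\<^sub>R e u + (1 - \<theta>) *\<^sub>R e v"
    and left_inv: "\<And>u. u \<in> C \<Longrightarrow> g (e u) = u"
  shows "convex_on (e ` C) (\<lambda>x. f (g x))"
  unfolding convex_on_def
proof (intro conjI ballI allI impI)
  show "convex (e ` C)" by (rule convex_image_comb_linear[OF C ecomb])
  fix x z and a b :: real
  assume "x \<in> e ` C" "z \<in> e ` C" "0 \<le> a" "0 \<le> b" "a + b = 1"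
  then obtain u v where uv: "u \<in> C" "v \<in> C" "x = e u" "z = e v" and ab: "b = 1 - a" "0 \<le> a" "a \<le> 1"
    by auto
  have "comb a u v \<in> C" using C uv ab by (simp add: convex_set_def)
  then have "f (g (a *\<^sub>R x + b *\<^sub>R z)) = f (comb a u v)"
    by (simp add: uv ab left_inv flip: ecomb)
  also have "\<dots> \<le> a * f u + (1 - a) * f v" using f uv ab by (simp add: convex_fun_on_def)
  finally show "f (g (a *\<^sub>R x + b *\<^sub>R z)) \<le> a * f (g x) + b * f (g z)"
    by (simp add: uv ab left_inv)
qed

text \<open>Calibration is a statement about values and predictions only, so it transfers to
  any copy e ` C of the domain on which a left inverse g of e is used to read back points.\<close>
lemma calibration_image:
  fixes e :: "'a \<Rightarrow> 'b" and psi :: "'a \<Rightarrow> real^'n::finite" and L :: "real^'k^'n"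
  assumes left_inv: "\<And>u. u \<in> C \<Longrightarrow> g (e u) = u"
    and cal: "\<forall>q\<in>prob_simplex. (INF u\<in>{u\<in>C. pred u \<notin> argmin_loss L q}. ereal (q \<bullet> psi u))
                 > (INF u\<in>C. ereal (q \<bullet> psi u))"
  shows "\<forall>q\<in>prob_simplex.
           (INF x\<in>{x\<in>e ` C. pred (g x) \<notin> argmin_loss L q}. ereal (q \<bullet> psi (g x)))
             > (INF x\<in>e ` C. ereal (q \<bullet> psi (g x)))"
proof
  fix q :: "real^'n" assume q: "q \<in> prob_simplex"
  have transport: "(INF x\<in>e ` X. ereal (q \<bullet> psi (g x))) = (INF u\<in>X. ereal (q \<bullet> psi u))"
    if "X \<subseteq> C" for X
    unfolding image_image using that left_inv by (intro INF_cong) auto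
  have "{x\<in>e ` C. pred (g x) \<notin> argmin_loss L q} = e ` {u\<in>C. pred u \<notin> argmin_loss L q}"
    using left_inv by force
  then show "(INF x\<in>{x\<in>e ` C. pred (g x) \<notin> argmin_loss L q}. ereal (q \<bullet> psi (g x)))
               > (INF x\<in>e ` C. ereal (q \<bullet> psi (g x)))"
    using cal q transport[of C] transport[of "{u\<in>C. pred u \<notin> argmin_loss L q}"] by simp
qed

text \<open>A convex calibrated surrogate on a subset of R^d, with d < n, can be moved into
  the Euclidean space real^'n (the one indexed by the outcomes) by reading the first d
  coordinates through a numbering of 'n; the image has affine dimension at most d.\<close>
lemma Euclidean_surrogate:
  fixes L :: "real^'k^'n"
  assumes ex: "convex_calibrated_surrogate_exists L d" and dn: "d < CARD('n)"
  obtains C' :: "(real^'n) set" and psi' :: "real^'n \<Rightarrow> real^'n" and pred' :: "real^'n \<Rightarrow> 'k"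
  where "aff_dim C' \<le> int d" "\<And>y. convex_on C' (\<lambda>x. psi' x $ y)"
    "\<And>x y. x \<in> C' \<Longrightarrow> 0 \<le> psi' x $ y"
    "\<forall>q\<in>prob_simplex. (INF x\<in>{x\<in>C'. pred' x \<notin> argmin_loss L q}. ereal (q \<bullet> psi' x))
                 > (INF x\<in>C'. ereal (q \<bullet> psi' x))"
proof -
  obtain C psi where Cd: "C \<subseteq> Rvec d" and C: "convex_set C" and nn: "\<forall>u\<in>C. \<forall>y. 0 \<le> psi u $ y"
    and cvx: "\<forall>y. convex_fun_on C (\<lambda>u. psi u $ y)" and "calibrated L C psi"
    using ex unfolding convex_calibrated_surrogate_exists_def by blast
  then obtain pred :: "(nat \<Rightarrow> real) \<Rightarrow> 'k" where cal: "\<forall>q\<in>prob_simplex.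
       (INF u\<in>{u\<in>C. pred u \<notin> argmin_loss L q}. ereal (q \<bullet> psi u)) > (INF u\<in>C. ereal (q \<bullet> psi u))"
    unfolding calibrated_def by blast
  obtain ii :: "'n \<Rightarrow> nat" where ii: "bij_betw ii UNIV {..<CARD('n)}"
    by (rule obtain_coordinate_numbering)
  define e :: "(nat \<Rightarrow> real) \<Rightarrow> real^'n" where "e = (\<lambda>u. \<chi> i. u (ii i))"
  define g :: "real^'n \<Rightarrow> nat \<Rightarrow> real"
    where "g = (\<lambda>x j. if j < CARD('n) then x $ inv ii j else 0)"
  have ge: "g (e u) = u" if "u \<in> C" for u
  proof
    fix j
    show "g (e u) j = u j"
    proof (cases "j < CARD('n)")
      case True
      then have "ii (inv ii j) = j" using ii by (simp add: bij_betw_def f_inv_into_f)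
      then show ?thesis using True by (simp add: g_def e_def)
    next
      case False
      then show ?thesis using that Cd dn by (auto simp: g_def Rvec_def)
    qed
  qed
  have ecomb: "e (comb \<theta> u v) = \<theta> *\<^sub>R e u + (1 - \<theta>) *\<^sub>R e v" for \<theta> u v
    by (simp add: vec_eq_iff e_def comb_def)
  show ?thesis
  proof (rule that[of "e ` C" "\<lambda>x. psi (g x)" "\<lambda>x. pred (g x)"])
    show "aff_dim (e ` C) \<le> int d"
      using ii Cd by (intro aff_dim_le_vanishing_coordinates[of ii]) (auto simp: bij_betw_def e_def Rvec_def)
    show "convex_on (e ` C) (\<lambda>x. psi (g x) $ y)" for y
      using convex_on_image_comb_linear[OF C cvx[rule_format, of y] ecomb ge] .
    show "0 \<le> psi (g x) $ y" if "x \<in> e ` C" for x y using that nn ge by auto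
  qed (rule calibration_image[OF ge cal])
qed

text \<open>Every admissible surrogate dimension d satisfies affdim L - 1 \<le> d: for d \<ge> n this is
  trivial, and for d < n it follows from the Euclidean bound.\<close>
lemma surrogate_dimension_bound:
  fixes L :: "real^'k^'n"
  assumes p: "p \<in> relint_prob_simplex" and pc: "\<And>t. p \<bullet> column t L = c"
    and ex: "convex_calibrated_surrogate_exists L d"
  shows "affdim L - 1 \<le> int d"
proof (cases "d < CARD('n)")
  case True
  obtain C' :: "(real^'n) set" and psi' :: "real^'n \<Rightarrow> real^'n" and pred' :: "real^'n \<Rightarrow> 'k"
    where dim: "aff_dim C' \<le> int d" and cvx: "\<And>y. convex_on C' (\<lambda>x. psi' x $ y)"
      and nn: "\<And>x y. x \<in> C' \<Longrightarrow> 0 \<le> psi' x $ y"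
      and cal: "\<forall>q\<in>prob_simplex. (INF x\<in>{x\<in>C'. pred' x \<notin> argmin_loss L q}. ereal (q \<bullet> psi' x))
                 > (INF x\<in>C'. ereal (q \<bullet> psi' x))"
    using Euclidean_surrogate[OF ex True] by blast
  have "p \<in> prob_simplex" using p by (auto simp: relint_prob_simplex_def prob_simplex_def less_imp_le)
  then have gap: "(INF x\<in>C'. ereal (p \<bullet> psi' x))
      < (INF x\<in>{x\<in>C'. pred' x \<notin> argmin_loss L p}. ereal (p \<bullet> psi' x))"
    using cal by blast
  have "C' \<noteq> {}"
  proof
    assume "C' = {}"
    with gap show False by simp
  qed
  from calibrated_surrogate_aff_dim_bound[OF this cvx nn p pc cal] dim
  show ?thesis by (simp add: affdim_def)
next
  case False
  then show ?thesis using aff_dim_le_DIM[of "range (\<lambda>t. column t L)"] by (simp add: affdim_def)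
qed

lemma ereal_le_CCdim:
  fixes L :: "real^'k^'n"
  assumes bound: "\<And>d. convex_calibrated_surrogate_exists L d \<Longrightarrow> k \<le> int d"
  shows "ereal (real_of_int k) \<le> (case CCdim L of enat d \<Rightarrow> ereal (real d) | \<infinity> \<Rightarrow> \<infinity>)"
proof -
  define D where "D = {d. convex_calibrated_surrogate_exists L d}"
  have CC: "CCdim L = Inf (enat ` D)" by (simp add: CCdim_def D_def)
  show ?thesis
  proof (cases "D = {}")
    case True
    then show ?thesis by (simp add: CC Inf_enat_def)
  next
    case False
    have "(LEAST x. x \<in> enat ` D) \<in> enat ` D" by (rule LeastI_ex) (use False in blast)
    then have "CCdim L \<in> enat ` D" using False by (simp add: CC Inf_enat_def)
    then obtain d0 where d0: "d0 \<in> D" "CCdim L = enat d0" by blast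
    then have "k \<le> int d0" using bound by (simp add: D_def)
    then have "real_of_int k \<le> real_of_int (int d0)" by (simp only: of_int_le_iff)
    then show ?thesis using d0 by simp
  qed
qed

theorem mainTheorem14:
  fixes L :: "real^'k^'n"
  assumes nonneg: "\<forall>i j. 0 \<le> L $ i $ j"
    and standing: "\<forall>t. \<exists>q\<in>prob_simplex. argmin_loss L q = {t}"
    and hyp: "\<exists>p\<in>relint_prob_simplex. \<exists>c::real. 0 \<le> c \<and> (\<forall>t. p \<bullet> column t L = c)"
  shows "ereal (real_of_int (affdim L - 1)) \<le> (case CCdim L of enat d \<Rightarrow> ereal (real d) | \<infinity> \<Rightarrow> \<infinity>)"
proof -
  obtain p c where p: "p \<in> relint_prob_simplex" and pc: "\<And>t. p \<bullet> column t L = c"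
    using hyp by blast
  show ?thesis
    by (rule ereal_le_CCdim) (rule surrogate_dimension_bound[OF p pc])
qed

end
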